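(* Let $q$ be a prime power, $b,k,t$ positive integers with $b\le k$, and let $wt_b:\mathbb{F}_q^k\to\{0,b,b+1,\ldots,k\}$ be the $b$-symbol weight function. Let $g_1=0$ and $g_i=b+i-2$ for $2\le i\le k-b+2$. Then \[ r_b^{wt_b}(k,t)\le N_b\big(\boldsymbol{B}^{(2)}_{wt_b}(t,g_1,\ldots,g_{k-b+2})\big), \] where $\boldsymbol{B}^{(2)}_{wt_b}(t,g_1,\ldots,g_{k-b+2})$ is the $(k-b+2)\times(k-b+2)$ matrix with entries \[ [\boldsymbol{B}^{(2)}_{wt_b}]_{ij}=\begin{cases}0,& i=j,\\ 2t-\max\{i,j\}+2,& i\ne j\text{ and } (i=1\text{ or } j=1),\\ 2t,& i,j>1\text{ and } 0<|i-j|<b,\\ [2t+b-|i-j|]^+,& i,j>1\text{ and } |i-j|\ge b.\end{cases} \]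
   Context: For $\boldsymbol{z}=(z_0,\ldots,z_{n-1}),\boldsymbol{w}\in\mathbb{F}_q^n$, $d_b(\boldsymbol{z},\boldsymbol{w})$ is the number of $i\in\{0,\ldots,n-1\}$ with $(z_i,\ldots,z_{i+b-1})\ne(w_i,\ldots,w_{i+b-1})$ (indices mod $n$), and $wt_b(\boldsymbol{x})=d_b(\boldsymbol{x},\boldsymbol{0})$. $[x]^+=\max\{x,0\}$. A systematic encoding $\mathrm{Enc}(\boldsymbol{x})=(\boldsymbol{x},p(\boldsymbol{x}))\in\mathbb{F}_q^{k+r}$ is a function-correcting $b$-symbol code for $f$ if $d_b(\mathrm{Enc}(\boldsymbol{x}_1),\mathrm{Enc}(\boldsymbol{x}_2))\ge 2t+1$ whenever $f(\boldsymbol{x}_1)\ne f(\boldsymbol{x}_2)$; $r_b^f(k,t)$ is the smallest $r$ for which one exists. For an $M\times M$ nonnegative integer matrix $\boldsymbol{B}$, $N_b(\boldsymbol{B})$ is the smallest $r$ such that there exist $\boldsymbol{p}_1,\ldots,\boldsymbol{p}_M\in\mathbb{F}_q^r$ (in some ordering) with $d_b(\boldsymbol{p}_i,\boldsymbol{p}_j)\ge[\boldsymbol{B}]_{ij}$ for all $i,j$. *)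

theory Defs
  imports Main
begin

definition bsym_dist :: "nat \<Rightarrow> 'a list \<Rightarrow> 'a list \<Rightarrow> nat" where
  "bsym_dist b z w = card {i. i < length z \<and>
      (\<exists>j<b. z ! ((i + j) mod length z) \<noteq> w ! ((i + j) mod length z))}"

definition bsym_wt :: "nat \<Rightarrow> 'a::zero list \<Rightarrow> nat" where
  "bsym_wt b x = bsym_dist b x (replicate (length x) 0)"

definition is_fcbsc :: "nat \<Rightarrow> ('a list \<Rightarrow> 'c) \<Rightarrow> nat \<Rightarrow> nat \<Rightarrow> nat \<Rightarrow> ('a list \<Rightarrow> 'a list) \<Rightarrow> bool" where
  "is_fcbsc b f k t r p \<longleftrightarrow>
     (\<forall>x. length x = k \<longrightarrow> length (p x) = r) \<and>
     (\<forall>x1 x2. length x1 = k \<longrightarrow> length x2 = k \<longrightarrow> f x1 \<noteq> f x2 \<longrightarrow>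
        2 * t + 1 \<le> bsym_dist b (x1 @ p x1) (x2 @ p x2))"

definition opt_redundancy :: "'a itself \<Rightarrow> nat \<Rightarrow> ('a list \<Rightarrow> 'c) \<Rightarrow> nat \<Rightarrow> nat \<Rightarrow> nat" where
  "opt_redundancy _ b f k t = (LEAST r. \<exists>p :: 'a list \<Rightarrow> 'a list. is_fcbsc b f k t r p)"

definition N_b :: "'a itself \<Rightarrow> nat \<Rightarrow> nat \<Rightarrow> (nat \<Rightarrow> nat \<Rightarrow> int) \<Rightarrow> nat" where
  "N_b _ b M B = (LEAST r. \<exists>P :: nat \<Rightarrow> 'a list.
      (\<forall>i\<in>{1..M}. length (P i) = r) \<and>
      (\<forall>i\<in>{1..M}. \<forall>j\<in>{1..M}. B i j \<le> int (bsym_dist b (P i) (P j))))"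

definition B2_wt :: "nat \<Rightarrow> nat \<Rightarrow> nat \<Rightarrow> nat \<Rightarrow> int" where
  "B2_wt b t i j =
     (if i = j then 0
      else if i = 1 \<or> j = 1 then 2 * int t - int (max i j) + 2
      else if \<bar>int i - int j\<bar> < int b then 2 * int t
      else max (2 * int t + int b - \<bar>int i - int j\<bar>) 0)"

end

theory Submission
  imports Defs "HOL-Number_Theory.Cong"
begin

text \<open>Encode \<open>x\<close> by the word \<open>P i\<close> attached to its weight class, \<open>g\<^sub>i = wt\<^sub>b(x)\<close>.
  The b-symbol distance is almost additive under concatenation:
  \<open>d\<^sub>b(x\<^sub>1 p\<^sub>1, x\<^sub>2 p\<^sub>2) \<ge> d\<^sub>b(x\<^sub>1, x\<^sub>2) + d\<^sub>b(p\<^sub>1, p\<^sub>2) - (b - 1)\<close>.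
  Count agreeing windows instead: such a window of the concatenation lies inside \<open>x\<close>,
  inside \<open>p\<close>, or crosses one of the two junctions.  If \<open>(p\<^sub>1, p\<^sub>2)\<close> has the shorter
  common prefix, a window agreeing across the junction from \<open>x\<close> into \<open>p\<close> also agrees
  cyclically in \<open>x\<close>, because its wrapped-around part is a prefix of \<open>x\<close> no longer than
  the agreeing prefix of \<open>p\<close>; at most \<open>b - 1\<close> windows cross the other junction.  The
  other case is symmetric after rotating \<open>x p\<close> to \<open>p x\<close>.
  Since two words of different weights have distance at least \<open>b\<close> and at least the
  difference of their weights, each case of the matrix \<open>B\<close> then gives
  \<open>d\<^sub>b(x\<^sub>1, x\<^sub>2) + B\<^sub>i\<^sub>j \<ge> 2t + b\<close>, hence distance at least \<open>2t + 1\<close>.\<close>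

definition agree_windows :: "nat \<Rightarrow> 'a list \<Rightarrow> 'a list \<Rightarrow> nat set" where
  "agree_windows b z w = {i. i < length z \<and>
      (\<forall>j<b. z ! ((i + j) mod length z) = w ! ((i + j) mod length z))}"

lemma finite_agree_windows [simp]: "finite (agree_windows b z w)"
  unfolding agree_windows_def by auto

lemma bsym_dist_add_card_agree_windows:
  "bsym_dist b z w + card (agree_windows b z w) = length z"
proof -
  have "{i. i < length z \<and> (\<exists>j<b. z ! ((i + j) mod length z) \<noteq> w ! ((i + j) mod length z))}
      = {..<length z} - agree_windows b z w"
    by (auto simp: agree_windows_def)
  moreover have "agree_windows b z w \<subseteq> {..<length z}"
    by (auto simp: agree_windows_def)
  moreover from this have "card (agree_windows b z w) \<le> length z"
    by (metis card_lessThan card_mono finite_lessThan)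
  ultimately show ?thesis
    unfolding bsym_dist_def by (simp add: card_Diff_subset)
qed

lemma bsym_dist_self [simp]: "bsym_dist b z z = 0"
  by (simp add: bsym_dist_def)

lemma bsym_dist_commute: "length w = length z \<Longrightarrow> bsym_dist b z w = bsym_dist b w z"
  unfolding bsym_dist_def by (rule arg_cong[where f = card]) auto

lemma bsym_dist_triangle:
  assumes "length y = length x" "length z = length x"
  shows "bsym_dist b x z \<le> bsym_dist b x y + bsym_dist b y z"
proof -
  define D where "D u v = {i. i < length x \<and>
      (\<exists>j<b. u ! ((i + j) mod length x) \<noteq> v ! ((i + j) mod length x))}" for u v :: "'a list"
  have "card (D x z) \<le> card (D x y \<union> D y z)"
    by (rule card_mono) (auto simp: D_def)
  also have "\<dots> \<le> card (D x y) + card (D y z)"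
    by (rule card_Un_le)
  finally show ?thesis
    using assms by (simp add: bsym_dist_def D_def)
qed

lemma card_disagreements_le_bsym_dist:
  assumes "0 < b"
  shows "card {s. s < length z \<and> z ! s \<noteq> w ! s} \<le> bsym_dist b z w"
  unfolding bsym_dist_def using assms by (intro card_mono) auto

lemma b_le_bsym_dist:
  assumes "length y = length x" "b \<le> length x" "x \<noteq> y"
  shows "b \<le> bsym_dist b x y"
proof -
  let ?k = "length x"
  obtain s where s: "s < ?k" "x ! s \<noteq> y ! s"
    using assms(1,3) nth_equalityI by metis
  define f where "f m = (if m \<le> s then s - m else s + ?k - m)" for m
  have f: "f m < ?k \<and> (f m + m) mod ?k = s" if "m < b" for m
    using that assms(2) s(1) by (auto simp: f_def)
  have "inj_on f {..<b}"
    by (rule inj_onI) (use assms(2) in \<open>auto simp: f_def split: if_splits\<close>)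
  moreover have "f ` {..<b} \<subseteq> {i. i < ?k \<and>
      (\<exists>j<b. x ! ((i + j) mod ?k) \<noteq> y ! ((i + j) mod ?k))}"
    using f s(2) by fastforce
  ultimately have "card (f ` {..<b}) \<le> bsym_dist b x y"
    unfolding bsym_dist_def by (intro card_mono) auto
  with \<open>inj_on f {..<b}\<close> show ?thesis
    by (simp add: card_image)
qed

lemma agree_windows_rotate:
  assumes "length w = length z" "i < length z"
  shows "i \<in> agree_windows b (rotate m z) (rotate m w)
    \<longleftrightarrow> (m + i) mod length z \<in> agree_windows b z w"
proof -
  have "rotate m u ! ((i + j) mod length z) = u ! (((m + i) mod length z + j) mod length z)"
    if "length u = length z" for u :: "'a list" and j
  proof -
    have "(i + j) mod length z < length u"
      using that assms(2) mod_less_divisor[of "length z" "i + j"] by linarith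
    then show ?thesis
      using that by (simp add: nth_rotate mod_add_left_eq mod_add_right_eq add.assoc)
  qed
  moreover have "(m + i) mod length z < length z"
    using assms(2) mod_less_divisor[of "length z" "m + i"] by linarith
  ultimately show ?thesis
    using assms by (simp add: agree_windows_def)
qed

lemma card_agree_windows_rotate:
  assumes "length w = length z"
  shows "card (agree_windows b (rotate m z) (rotate m w)) = card (agree_windows b z w)"
proof -
  have le: "card (agree_windows b (rotate m z) (rotate m w)) \<le> card (agree_windows b z w)"
    if "length w = length z" for m and z w :: "'a list"
  proof (rule card_inj_on_le)
    have "inj_on (\<lambda>i. (m + i) mod length z) {..<length z}"
      by (rule inj_onI) (metis cong_def cong_add_lcancel_nat cong_less_modulus_unique_nat lessThan_iff)
    then show "inj_on (\<lambda>i. (m + i) mod length z) (agree_windows b (rotate m z) (rotate m w))"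
      by (rule inj_on_subset) (auto simp: agree_windows_def)
    show "(\<lambda>i. (m + i) mod length z) ` agree_windows b (rotate m z) (rotate m w) \<subseteq> agree_windows b z w"
      using agree_windows_rotate[OF that] by (auto simp: agree_windows_def)
  qed simp
  show ?thesis
  proof (cases "z = []")
    case False
    define m' where "m' = length z - m mod length z"
    have "(m' + m) mod length z = 0"
      using False unfolding m'_def
      by (metis add.commute le_add_diff_inverse mod_add_left_eq mod_le_divisor mod_self length_greater_0_conv)
    then have "rotate m' (rotate m z) = z" "rotate m' (rotate m w) = w"
      using assms by (simp_all add: rotate_rotate)
    then show ?thesis
      using le[OF assms, of m] le[of "rotate m w" "rotate m z" m'] assms by simp
  qed (use assms in simp)
qed

lemma agree_windows_append_prefix:
  assumes "length x2 = length x1" "length p2 = length p1" "0 < b" "i + b \<le> length x1"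
    and "i \<in> agree_windows b (x1 @ p1) (x2 @ p2)"
  shows "i \<in> agree_windows b x1 x2"
proof -
  have "x1 ! ((i + j) mod length x1) = x2 ! ((i + j) mod length x1)" if "j < b" for j
  proof -
    have "i + j < length x1"
      using that assms(4) by linarith
    then show ?thesis
      using assms(1,2,5) that by (auto simp: agree_windows_def nth_append)
  qed
  then show ?thesis
    using assms(3,4) by (simp add: agree_windows_def)
qed

lemma agree_windows_append_straddle:
  assumes "length x2 = length x1" "length p2 = length p1"
    and "i < length x1" "length x1 < i + b"
    and "i \<in> agree_windows b (x1 @ p1) (x2 @ p2)"
    and "take (i + b - length x1) p1 = take (i + b - length x1) p2
      \<Longrightarrow> take (i + b - length x1) x1 = take (i + b - length x1) x2"
  shows "i \<in> agree_windows b x1 x2"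
proof -
  let ?k = "length x1" and ?n = "length x1 + length p1"
  define m where "m = i + b - ?k"
  have window: "(x1 @ p1) ! ((i + j) mod ?n) = (x2 @ p2) ! ((i + j) mod ?n)" if "j < b" for j
    using assms(1,2,5) that by (simp add: agree_windows_def)
  have "take m p1 = take m p2"
  proof (rule nth_equalityI)
    show "length (take m p1) = length (take m p2)"
      using assms(2) by simp
    fix s assume "s < length (take m p1)"
    then have "s < m" "s < length p1"
      by auto
    then have "(i + (?k - i + s)) mod ?n = ?k + s" "?k - i + s < b"
      using assms(3) m_def by auto
    then show "take m p1 ! s = take m p2 ! s"
      using window[of "?k - i + s"] \<open>s < m\<close> assms(1) by (simp add: nth_append)
  qed
  then have prefix: "x1 ! s = x2 ! s" if "s < m" for s
    using assms(6) that unfolding m_def by (metis nth_take)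
  have "x1 ! ((i + j) mod ?k) = x2 ! ((i + j) mod ?k)" if "j < b" for j
  proof (cases "i + j < ?k")
    case True
    then show ?thesis
      using window[OF that] assms(1) by (simp add: nth_append)
  next
    case False
    then have "(i + j) mod ?k \<le> i + j - ?k"
      by (simp add: le_mod_geq)
    then show ?thesis
      using prefix False that m_def by simp
  qed
  then show ?thesis
    using assms(3) by (simp add: agree_windows_def)
qed

lemma common_prefixes_comparable:
  "(\<forall>m. take m xs = take m ys \<longrightarrow> take m us = take m vs)
    \<or> (\<forall>m. take m us = take m vs \<longrightarrow> take m xs = take m ys)"
proof (rule ccontr)
  assume "\<not> ?thesis"
  then obtain m1 m2 where "take m1 xs = take m1 ys" "take m1 us \<noteq> take m1 vs"
    and "take m2 us = take m2 vs" "take m2 xs \<noteq> take m2 ys"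
    by blast
  then show False
    by (metis min.absorb1 min.absorb2 nat_le_linear take_take)
qed

lemma card_agree_windows_append_le_of_take:
  assumes "length x2 = length x1" "length p2 = length p1" "0 < b"
    and "\<And>m. take m p1 = take m p2 \<Longrightarrow> take m x1 = take m x2"
  shows "card (agree_windows b (x1 @ p1) (x2 @ p2))
    \<le> card (agree_windows b x1 x2) + card (agree_windows b p1 p2) + (b - 1)"
proof -
  let ?k = "length x1" and ?n = "length x1 + length p1"
  let ?Z = "agree_windows b (x1 @ p1) (x2 @ p2)"
    and ?X = "agree_windows b x1 x2" and ?P = "agree_windows b p1 p2"
  have "?Z \<subseteq> ?X \<union> (+) ?k ` ?P \<union> {?n + 1 - b..<?n}"
  proof
    fix i assume i: "i \<in> ?Z"
    then have "i < ?n"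
      by (simp add: agree_windows_def)
    consider "i + b \<le> ?k" | "i < ?k" "?k < i + b"
      | j where "i = ?k + j" "j + b \<le> length p1" | "?n + 1 - b \<le> i"
    proof (cases "i < ?k")
      case True
      then show ?thesis
        using that(1,2) by (cases "i + b \<le> ?k") auto
    next
      case False
      then have "i = ?k + (i - ?k)"
        by simp
      then show ?thesis
        using that(3,4) by (cases "i - ?k + b \<le> length p1") auto
    qed
    then show "i \<in> ?X \<union> (+) ?k ` ?P \<union> {?n + 1 - b..<?n}"
    proof cases
      case 1
      then show ?thesis
        using agree_windows_append_prefix[OF assms(1-3) 1 i] by blast
    next
      case 2
      then show ?thesis
        using agree_windows_append_straddle[OF assms(1,2) 2 i assms(4)] by blast
    next
      case (3 j)
      have "j \<in> agree_windows b (rotate ?k (x1 @ p1)) (rotate ?k (x2 @ p2))"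
        using agree_windows_rotate[of "x2 @ p2" "x1 @ p1" j b ?k] i 3 \<open>i < ?n\<close> assms(1,2)
        by simp
      then have "j \<in> agree_windows b (p1 @ x1) (p2 @ x2)"
        using assms(1) by (metis rotate_append)
      then have "j \<in> ?P"
        using agree_windows_append_prefix[of p2 p1 x2 x1 b j] 3 assms by simp
      then show ?thesis
        using 3 by blast
    next
      case 4
      then show ?thesis
        using \<open>i < ?n\<close> by simp
    qed
  qed
  then have "card ?Z \<le> card (?X \<union> (+) ?k ` ?P \<union> {?n + 1 - b..<?n})"
    by (intro card_mono) auto
  also have "\<dots> \<le> card ?X + card ((+) ?k ` ?P) + card {?n + 1 - b..<?n}"
    by (meson card_Un_le add_right_mono order_trans)
  also have "\<dots> \<le> card ?X + card ?P + (b - 1)"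
    using card_image_le[of ?P "(+) ?k"] by simp
  finally show ?thesis .
qed

lemma card_agree_windows_append_le:
  assumes "length x2 = length x1" "length p2 = length p1" "0 < b"
  shows "card (agree_windows b (x1 @ p1) (x2 @ p2))
    \<le> card (agree_windows b x1 x2) + card (agree_windows b p1 p2) + (b - 1)"
  using common_prefixes_comparable[of p1 p2 x1 x2]
proof
  assume "\<forall>m. take m p1 = take m p2 \<longrightarrow> take m x1 = take m x2"
  then show ?thesis
    using card_agree_windows_append_le_of_take[OF assms] by blast
next
  assume "\<forall>m. take m x1 = take m x2 \<longrightarrow> take m p1 = take m p2"
  then have "card (agree_windows b (p1 @ x1) (p2 @ x2))
      \<le> card (agree_windows b p1 p2) + card (agree_windows b x1 x2) + (b - 1)"
    using card_agree_windows_append_le_of_take[OF assms(2,1,3)] by blast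
  moreover have "rotate (length p1) (p1 @ x1) = x1 @ p1" "rotate (length p1) (p2 @ x2) = x2 @ p2"
    using assms(2) by (metis rotate_append)+
  ultimately show ?thesis
    using card_agree_windows_rotate[of "p2 @ x2" "p1 @ x1" b "length p1"] assms by simp
qed

lemma bsym_dist_append_ge:
  assumes "length x2 = length x1" "length p2 = length p1" "0 < b"
  shows "bsym_dist b x1 x2 + bsym_dist b p1 p2 \<le> bsym_dist b (x1 @ p1) (x2 @ p2) + (b - 1)"
  using card_agree_windows_append_le[OF assms] bsym_dist_add_card_agree_windows[of b x1 x2]
    bsym_dist_add_card_agree_windows[of b p1 p2]
    bsym_dist_add_card_agree_windows[of b "x1 @ p1" "x2 @ p2"]
  by simp

lemma bsym_wt_le_length: "bsym_wt b x \<le> length x"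
  using bsym_dist_add_card_agree_windows[of b x "replicate (length x) 0"]
  unfolding bsym_wt_def by linarith

lemma b_le_bsym_wt:
  assumes "b \<le> length x" "bsym_wt b x \<noteq> 0"
  shows "b \<le> bsym_wt b x"
proof -
  have "x \<noteq> replicate (length x) 0"
    using assms(2) unfolding bsym_wt_def by (metis bsym_dist_self)
  then show ?thesis
    using b_le_bsym_dist[of "replicate (length x) 0" x b] assms(1) unfolding bsym_wt_def by simp
qed

lemma bsym_wt_diff_le_bsym_dist:
  assumes "length y = length x"
  shows "\<bar>int (bsym_wt b x) - int (bsym_wt b y)\<bar> \<le> int (bsym_dist b x y)"
  using bsym_dist_triangle[of y x "replicate (length x) 0" b]
    bsym_dist_triangle[of x y "replicate (length x) 0" b] bsym_dist_commute[of y x b] assms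
  unfolding bsym_wt_def by simp

text \<open>Inverse of the paper's \<open>g\<^sub>1 = 0\<close>, \<open>g\<^sub>i = b + i - 2\<close>.\<close>

definition wt_index :: "nat \<Rightarrow> nat \<Rightarrow> nat" where
  "wt_index b w = (if w = 0 then 1 else w + 2 - b)"

lemma wt_index_range:
  assumes "w \<le> k" "w \<noteq> 0 \<Longrightarrow> b \<le> w"
  shows "wt_index b w \<in> {1..k - b + 2}"
  using assms by (auto simp: wt_index_def)

lemma B2_wt_wt_index_ge:
  assumes "0 < b" "w1 \<noteq> w2" "w1 \<noteq> 0 \<Longrightarrow> b \<le> w1" "w2 \<noteq> 0 \<Longrightarrow> b \<le> w2"
    and "\<bar>int w1 - int w2\<bar> \<le> int d" "b \<le> d"
  shows "2 * int t + int b \<le> int d + B2_wt b t (wt_index b w1) (wt_index b w2)"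
  using assms by (auto simp: B2_wt_def wt_index_def)

lemma exists_words_bsym_dist_ge:
  fixes B :: "nat \<Rightarrow> nat \<Rightarrow> int"
  assumes "0 < b" "\<And>i. B i i \<le> 0" "\<And>i j. B i j \<le> int c"
  shows "\<exists>r (P :: nat \<Rightarrow> 'a::zero_neq_one list). (\<forall>i\<in>{1..M}. length (P i) = r) \<and>
    (\<forall>i\<in>{1..M}. \<forall>j\<in>{1..M}. B i j \<le> int (bsym_dist b (P i) (P j)))"
proof -
  \<comment> \<open>\<open>P i\<close> is the indicator of the \<open>i\<close>-th block of length \<open>c\<close>, so distinct words
    differ in at least \<open>c\<close> positions.\<close>
  define P :: "nat \<Rightarrow> 'a list" where
    "P i = map (\<lambda>s. if s div c = i then 1 else 0) [0..<(M + 1) * c]" for i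
  have "B i j \<le> int (bsym_dist b (P i) (P j))" if "i \<in> {1..M}" "j \<in> {1..M}" for i j
  proof (cases "i = j")
    case True
    then show ?thesis
      using assms(2)[of i] by (metis of_nat_0_le_iff order_trans)
  next
    case False
    have "{i * c..<i * c + c} \<subseteq> {s. s < length (P i) \<and> P i ! s \<noteq> P j ! s}"
    proof
      fix s assume s: "s \<in> {i * c..<i * c + c}"
      then have "s div c = i"
        by (intro div_nat_eqI) (auto simp: mult.commute)
      have "s < i * c + c"
        using s by simp
      also have "\<dots> \<le> (M + 1) * c"
        using that(1) by simp
      finally show "s \<in> {s. s < length (P i) \<and> P i ! s \<noteq> P j ! s}"
        using \<open>s div c = i\<close> False by (simp add: P_def)
    qed
    then have "c \<le> card {s. s < length (P i) \<and> P i ! s \<noteq> P j ! s}"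
      using card_mono[of _ "{i * c..<i * c + c}"] by fastforce
    also have "\<dots> \<le> bsym_dist b (P i) (P j)"
      using card_disagreements_le_bsym_dist[OF assms(1)] .
    finally show ?thesis
      using assms(3)[of i j] by linarith
  qed
  then show ?thesis
    by (intro exI[of _ "(M + 1) * c"] exI[of _ P]) (auto simp: P_def)
qed

lemma N_b_attained:
  fixes B :: "nat \<Rightarrow> nat \<Rightarrow> int"
  assumes "0 < b" "\<And>i. B i i \<le> 0" "\<And>i j. B i j \<le> int c"
  obtains P :: "nat \<Rightarrow> 'a::zero_neq_one list"
  where "\<forall>i\<in>{1..M}. length (P i) = N_b TYPE('a) b M B"
    and "\<forall>i\<in>{1..M}. \<forall>j\<in>{1..M}. B i j \<le> int (bsym_dist b (P i) (P j))"
proof -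
  have "\<exists>r (P :: nat \<Rightarrow> 'a list). (\<forall>i\<in>{1..M}. length (P i) = r) \<and>
      (\<forall>i\<in>{1..M}. \<forall>j\<in>{1..M}. B i j \<le> int (bsym_dist b (P i) (P j)))"
    using exists_words_bsym_dist_ge[OF assms] .
  from LeastI_ex[OF this] show thesis
    using that unfolding N_b_def by blast
qed

lemma is_fcbsc_bsym_wt_wt_index:
  fixes P :: "nat \<Rightarrow> 'a::zero list"
  assumes "0 < b" "b \<le> k"
    and lengths: "\<forall>i\<in>{1..k - b + 2}. length (P i) = r"
    and dists: "\<forall>i\<in>{1..k - b + 2}. \<forall>j\<in>{1..k - b + 2}. B2_wt b t i j \<le> int (bsym_dist b (P i) (P j))"
  shows "is_fcbsc b (bsym_wt b) k t r (\<lambda>x. P (wt_index b (bsym_wt b x)))"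
  unfolding is_fcbsc_def
proof (intro conjI allI impI)
  have index: "wt_index b (bsym_wt b x) \<in> {1..k - b + 2}" if "length x = k" for x :: "'a list"
    using wt_index_range bsym_wt_le_length b_le_bsym_wt assms(2) that by metis
  then show "length (P (wt_index b (bsym_wt b x))) = r" if "length x = k" for x :: "'a list"
    using lengths that by blast
  fix x1 x2 :: "'a list"
  assume lx: "length x1 = k" "length x2 = k" and wt: "bsym_wt b x1 \<noteq> bsym_wt b x2"
  define i1 i2 where "i1 = wt_index b (bsym_wt b x1)" and "i2 = wt_index b (bsym_wt b x2)"
  have "b \<le> bsym_dist b x1 x2"
    using b_le_bsym_dist[of x2 x1 b] lx wt assms(2) by auto
  then have "2 * int t + int b \<le> int (bsym_dist b x1 x2) + B2_wt b t i1 i2"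
    unfolding i1_def i2_def
    using B2_wt_wt_index_ge assms(1,2) lx wt b_le_bsym_wt bsym_wt_diff_le_bsym_dist by metis
  moreover have "B2_wt b t i1 i2 \<le> int (bsym_dist b (P i1) (P i2))"
    using dists index lx unfolding i1_def i2_def by blast
  moreover have "bsym_dist b x1 x2 + bsym_dist b (P i1) (P i2)
      \<le> bsym_dist b (x1 @ P i1) (x2 @ P i2) + (b - 1)"
    using bsym_dist_append_ge[of x2 x1 "P i2" "P i1" b] index lengths lx assms(1)
    unfolding i1_def i2_def by simp
  ultimately show "2 * t + 1 \<le> bsym_dist b (x1 @ P i1) (x2 @ P i2)"
    using assms(1) by linarith
qed

theorem lemma6p1:
  fixes b k t :: nat
  assumes "0 < b" "b \<le> k" "0 < t"
  shows "opt_redundancy TYPE('a::{finite,field}) b (bsym_wt b) k t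
           \<le> N_b TYPE('a) b (k - b + 2) (B2_wt b t)"
proof -
  have "B2_wt b t i i \<le> 0" "B2_wt b t i j \<le> int (2 * t + b)" for i j
    using assms(1) by (auto simp: B2_wt_def)
  then obtain P :: "nat \<Rightarrow> 'a list"
    where "\<forall>i\<in>{1..k - b + 2}. length (P i) = N_b TYPE('a) b (k - b + 2) (B2_wt b t)"
      and "\<forall>i\<in>{1..k - b + 2}. \<forall>j\<in>{1..k - b + 2}. B2_wt b t i j \<le> int (bsym_dist b (P i) (P j))"
    using N_b_attained[OF assms(1)] by metis
  then have "is_fcbsc b (bsym_wt b) k t (N_b TYPE('a) b (k - b + 2) (B2_wt b t))
      (\<lambda>x. P (wt_index b (bsym_wt b x)))"
    using is_fcbsc_bsym_wt_wt_index assms(1,2) by blast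
  then show ?thesis
    unfolding opt_redundancy_def by (intro Least_le) blast
qed

end
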